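(* Let $G=([n],E)$ be any graph and let $C$ be a cycle in $G$ with an odd number $|C|$ of vertices (identify $C$ with its vertex set). Then the polynomial $\frac{|C|-1}{2}-\sum_{i\in C}x_i$ is $2$-sos modulo $I_G$; consequently the odd cycle inequality $\sum_{i\in C}x_i\le\frac{|C|-1}{2}$ is valid on $\mathrm{TH}_2(I_G)$.
   Context: For a graph $G=([n],E)$, $I_G\subseteq\mathbb R[x_1,\dots,x_n]$ is the ideal generated by $x_i^2-x_i$ for all $i\in[n]$ and $x_ix_j$ for all $\{i,j\}\in E$ (it is the vanishing ideal of the set of characteristic vectors of stable sets of $G$). $\mathbb{R}[\mathbf x]_k$ denotes the polynomials of degree at most $k$. A polynomial $h$ is $k$-sos modulo $I$ if there are $g_1,\dots,g_r\in\mathbb{R}[\mathbf x]_k$ with $h-\sum_i g_i^2\in I$. The $k$-th theta body is $\mathrm{TH}_k(I)=\{p\in\mathbb R^n: l(p)\ge 0$ for every $l\in\mathbb{R}[\mathbf x]_1$ that is $k$-sos modulo $I\}$. *)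

theory Defs
  imports Complex_Main "HOL-Library.Poly_Mapping"
begin

text \<open>Multivariate real polynomials: finitely supported maps from monomials
(finitely supported exponent vectors nat \<Rightarrow>0 nat) to real coefficients.
Variable x_i is indexed by the natural number i; the graph lives on [n] = {1..n}.\<close>

type_synonym mpoly = "(nat \<Rightarrow>\<^sub>0 nat) \<Rightarrow>\<^sub>0 real"

definition Var :: "nat \<Rightarrow> mpoly" where
  "Var i = Poly_Mapping.single (Poly_Mapping.single i 1) 1"

definition Const :: "real \<Rightarrow> mpoly" where
  "Const c = Poly_Mapping.single 0 c"

definition mdeg :: "(nat \<Rightarrow>\<^sub>0 nat) \<Rightarrow> nat" where
  "mdeg m = (\<Sum>i\<in>Poly_Mapping.keys m. Poly_Mapping.lookup m i)"

definition polys :: "nat \<Rightarrow> mpoly set" where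
  "polys n = {p. \<forall>m\<in>Poly_Mapping.keys p. Poly_Mapping.keys m \<subseteq> {1..n}}"

definition polys_deg :: "nat \<Rightarrow> nat \<Rightarrow> mpoly set" where
  "polys_deg n k = {p \<in> polys n. \<forall>m\<in>Poly_Mapping.keys p. mdeg m \<le> k}"

definition ideal_gen :: "nat \<Rightarrow> mpoly set \<Rightarrow> mpoly set" where
  "ideal_gen n S = {p. \<exists>F q. finite F \<and> F \<subseteq> S \<and> (\<forall>g\<in>F. q g \<in> polys n)
                          \<and> p = (\<Sum>g\<in>F. q g * g)}"

definition is_graph :: "nat \<Rightarrow> nat set set \<Rightarrow> bool" where
  "is_graph n E \<longleftrightarrow> E \<subseteq> {{i, j} | i j. i \<in> {1..n} \<and> j \<in> {1..n} \<and> i \<noteq> j}"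

definition I_G :: "nat \<Rightarrow> nat set set \<Rightarrow> mpoly set" where
  "I_G n E = ideal_gen n ({Var i * Var i - Var i | i. i \<in> {1..n}}
                           \<union> {Var i * Var j | i j. {i, j} \<in> E})"

definition k_sos_mod :: "nat \<Rightarrow> nat \<Rightarrow> mpoly set \<Rightarrow> mpoly \<Rightarrow> bool" where
  "k_sos_mod n k I h \<longleftrightarrow> h \<in> polys n \<and>
     (\<exists>gs. set gs \<subseteq> polys_deg n k \<and> h - (\<Sum>g\<leftarrow>gs. g * g) \<in> I)"

definition eval :: "mpoly \<Rightarrow> (nat \<Rightarrow> real) \<Rightarrow> real" where
  "eval p x = (\<Sum>m\<in>Poly_Mapping.keys p. Poly_Mapping.lookup p m * (\<Prod>i\<in>Poly_Mapping.keys m. x i ^ Poly_Mapping.lookup m i))"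

text \<open>Points of R^n are functions nat \<Rightarrow> real vanishing outside {1..n}.\<close>
definition TH :: "nat \<Rightarrow> nat \<Rightarrow> mpoly set \<Rightarrow> (nat \<Rightarrow> real) set" where
  "TH n k I = {p. (\<forall>i. i \<notin> {1..n} \<longrightarrow> p i = 0) \<and>
      (\<forall>l \<in> polys_deg n 1. k_sos_mod n k I l \<longrightarrow> eval l p \<ge> 0)}"

definition is_cycle :: "nat set set \<Rightarrow> nat list \<Rightarrow> bool" where
  "is_cycle E cs \<longleftrightarrow> distinct cs \<and> length cs \<ge> 3 \<and>
     (\<forall>i < length cs. {cs ! i, cs ! ((i + 1) mod length cs)} \<in> E)"

end

theory Submission
  imports Defs
begin

text \<open>
  Write the odd cycle as x_0, ..., x_{2k+2} (x_i the variable of the i-th cycle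
  vertex).  Modulo I_G every x_i is idempotent and the product of adjacent
  variables vanishes, so the degree-2 polynomials
    A_j = (1 - x_0)(1 - x_{2j+1} - x_{2j+2})   (j = 0..k),
    B_j = x_0 (1 - x_{2j+2} - x_{2j+3})        (j = 0..k-1)
  are idempotent as well, i.e. A_j^2 = A_j and B_j^2 = B_j modulo I_G.  A purely
  ring-theoretic identity shows that (k+1) - sum_i x_i minus the sum of all A_j
  and B_j equals -x_0 x_1 - x_0 x_{2k+2}, which lies in I_G because both are
  edges of the cycle.  Hence (k+1) - sum_i x_i is 2-sos modulo I_G, and
  evaluating on the theta body yields the inequality.
\<close>

section \<open>Polynomials of bounded degree\<close>

lemma mdeg_superset:
  assumes "finite K" "Poly_Mapping.keys m \<subseteq> K"
  shows "mdeg m = (\<Sum>i\<in>K. Poly_Mapping.lookup m i)"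
  unfolding mdeg_def
  by (rule sum.mono_neutral_left) (auto simp: assms in_keys_iff)

lemma mdeg_add: "mdeg (a + b) = mdeg a + mdeg b"
proof -
  let ?K = "Poly_Mapping.keys a \<union> Poly_Mapping.keys b"
  have "mdeg (a + b) = (\<Sum>i\<in>?K. Poly_Mapping.lookup (a + b) i)"
    by (rule mdeg_superset) (auto dest: set_mp[OF keys_add])
  also have "\<dots> = (\<Sum>i\<in>?K. Poly_Mapping.lookup a i) + (\<Sum>i\<in>?K. Poly_Mapping.lookup b i)"
    by (simp add: lookup_add sum.distrib)
  also have "\<dots> = mdeg a + mdeg b"
    using mdeg_superset[of ?K a] mdeg_superset[of ?K b] by simp
  finally show ?thesis .
qed

lemma polys_deg_polys: "p \<in> polys_deg n k \<Longrightarrow> p \<in> polys n"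
  by (simp add: polys_deg_def)

lemma polys_deg_Const: "Const c \<in> polys_deg n k"
  by (simp add: polys_deg_def polys_def mdeg_def Const_def)

lemma polys_deg_zero: "0 \<in> polys_deg n k"
  by (simp add: polys_deg_def polys_def)

lemma polys_deg_one: "1 \<in> polys_deg n k"
  using polys_deg_Const[of 1] by (simp add: Const_def one_poly_mapping.abs_eq)

lemma polys_deg_Var: "i \<in> {1..n} \<Longrightarrow> Var i \<in> polys_deg n 1"
  by (simp add: polys_deg_def polys_def mdeg_def Var_def)

lemma polys_deg_add: "p \<in> polys_deg n k \<Longrightarrow> q \<in> polys_deg n k \<Longrightarrow> p + q \<in> polys_deg n k"
  unfolding polys_deg_def polys_def using keys_add[of p q] by blast

lemma polys_deg_uminus: "p \<in> polys_deg n k \<Longrightarrow> - p \<in> polys_deg n k"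
  unfolding polys_deg_def polys_def by simp

lemma polys_deg_diff: "p \<in> polys_deg n k \<Longrightarrow> q \<in> polys_deg n k \<Longrightarrow> p - q \<in> polys_deg n k"
  using polys_deg_add[OF _ polys_deg_uminus] by (metis diff_conv_add_uminus)

lemma polys_deg_sum: "(\<And>i. i \<in> A \<Longrightarrow> f i \<in> polys_deg n k) \<Longrightarrow> sum f A \<in> polys_deg n k"
  by (induction A rule: infinite_finite_induct) (simp_all add: polys_deg_zero polys_deg_add)

lemma polys_deg_mult:
  assumes "p \<in> polys_deg n k1" "q \<in> polys_deg n k2"
  shows "p * q \<in> polys_deg n (k1 + k2)"
  unfolding polys_deg_def polys_def
proof (intro CollectI conjI ballI)
  fix m assume "m \<in> Poly_Mapping.keys (p * q)"
  then obtain a b where ab: "m = a + b" "a \<in> Poly_Mapping.keys p" "b \<in> Poly_Mapping.keys q"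
    using keys_mult by blast
  show "Poly_Mapping.keys m \<subseteq> {1..n}"
    using ab assms keys_add[of a b] unfolding polys_deg_def polys_def by blast
  show "mdeg m \<le> k1 + k2"
    using ab assms unfolding polys_deg_def by (simp add: mdeg_add add_mono)
qed

text \<open>polys n is a subring; every polynomial has some finite degree bound.\<close>
lemma polys_mult: "p \<in> polys n \<Longrightarrow> q \<in> polys n \<Longrightarrow> p * q \<in> polys n"
proof -
  assume "p \<in> polys n" "q \<in> polys n"
  then have "p \<in> polys_deg n (Max (mdeg ` Poly_Mapping.keys p))"
        and "q \<in> polys_deg n (Max (mdeg ` Poly_Mapping.keys q))"
    by (auto simp: polys_deg_def)
  then show "p * q \<in> polys n" by (metis polys_deg_mult polys_deg_polys)
qed

lemma polys_one: "1 \<in> polys n"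
  by (rule polys_deg_polys[OF polys_deg_one])

lemma polys_add: "p \<in> polys n \<Longrightarrow> q \<in> polys n \<Longrightarrow> p + q \<in> polys n"
  unfolding polys_def using keys_add[of p q] by blast

lemma polys_uminus: "p \<in> polys n \<Longrightarrow> - p \<in> polys n"
  unfolding polys_def by simp

section \<open>Generated ideals\<close>

lemma ideal_gen_zero: "0 \<in> ideal_gen n S"
  unfolding ideal_gen_def by (rule CollectI, rule exI[of _ "{}"]) auto

lemma ideal_gen_in: "g \<in> S \<Longrightarrow> g \<in> ideal_gen n S"
  unfolding ideal_gen_def
  by (rule CollectI, rule exI[of _ "{g}"], rule exI[of _ "\<lambda>_. 1"])
     (simp add: polys_one)

text \<open>A representation can be extended by zero multipliers to any finite
  superset of generators; this lets two representations be merged.\<close>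
lemma ideal_gen_extend:
  fixes q :: "mpoly \<Rightarrow> mpoly"
  assumes "finite G" "F \<subseteq> G"
  shows "(\<Sum>g\<in>F. q g * g) = (\<Sum>g\<in>G. (if g \<in> F then q g else 0) * g)"
proof -
  have "(\<Sum>g\<in>F. q g * g) = (\<Sum>g\<in>F. (if g \<in> F then q g else 0) * g)"
    by simp
  also have "\<dots> = (\<Sum>g\<in>G. (if g \<in> F then q g else 0) * g)"
    by (rule sum.mono_neutral_left) (use assms in auto)
  finally show ?thesis .
qed

lemma ideal_gen_add:
  assumes "p \<in> ideal_gen n S" "r \<in> ideal_gen n S"
  shows "p + r \<in> ideal_gen n S"
proof -
  obtain F q where F: "finite F" "F \<subseteq> S" "\<forall>g\<in>F. q g \<in> polys n" "p = (\<Sum>g\<in>F. q g * g)"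
    using assms(1) unfolding ideal_gen_def by blast
  obtain F' q' where F': "finite F'" "F' \<subseteq> S" "\<forall>g\<in>F'. q' g \<in> polys n" "r = (\<Sum>g\<in>F'. q' g * g)"
    using assms(2) unfolding ideal_gen_def by blast
  define Q where "Q g = (if g \<in> F then q g else 0) + (if g \<in> F' then q' g else 0)" for g
  have "p + r = (\<Sum>g\<in>F \<union> F'. Q g * g)"
    unfolding F(4) F'(4) Q_def distrib_right sum.distrib
    using F(1) F'(1) by (intro arg_cong2[where f = "(+)"] ideal_gen_extend) auto
  moreover have "Q g \<in> polys n" for g
    unfolding Q_def using F(3) F'(3) by (intro polys_add) (auto simp: polys_def)
  ultimately show ?thesis
    using F(1,2) F'(1,2) unfolding ideal_gen_def by blast
qed

lemma ideal_gen_mult: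
  assumes "r \<in> polys n" "p \<in> ideal_gen n S"
  shows "r * p \<in> ideal_gen n S"
proof -
  obtain F q where F: "finite F" "F \<subseteq> S" "\<forall>g\<in>F. q g \<in> polys n" "p = (\<Sum>g\<in>F. q g * g)"
    using assms(2) unfolding ideal_gen_def by blast
  have "r * p = (\<Sum>g\<in>F. (r * q g) * g)"
    unfolding F(4) sum_distrib_left by (simp only: mult.assoc)
  moreover have "\<forall>g\<in>F. r * q g \<in> polys n" using F(3) assms(1) by (simp add: polys_mult)
  ultimately show ?thesis
    using F(1,2) unfolding ideal_gen_def
    by (intro CollectI exI[of _ F] exI[of _ "\<lambda>g. r * q g"] conjI) auto
qed

lemma ideal_gen_uminus: "p \<in> ideal_gen n S \<Longrightarrow> - p \<in> ideal_gen n S"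
  using ideal_gen_mult[OF polys_uminus[OF polys_one], of p n S] by simp

lemma ideal_gen_diff: "p \<in> ideal_gen n S \<Longrightarrow> q \<in> ideal_gen n S \<Longrightarrow> p - q \<in> ideal_gen n S"
  by (metis diff_conv_add_uminus ideal_gen_add ideal_gen_uminus)

lemma ideal_gen_sum_list:
  "(\<And>x. x \<in> set xs \<Longrightarrow> f x \<in> ideal_gen n S) \<Longrightarrow> (\<Sum>x\<leftarrow>xs. f x) \<in> ideal_gen n S"
  by (induction xs) (auto intro: ideal_gen_add ideal_gen_zero)

text \<open>Evaluation at a point is additive; this is all the theta-body argument needs.\<close>
lemma eval_add: "eval (p + q) x = eval p x + eval q x"
proof -
  let ?K = "Poly_Mapping.keys p \<union> Poly_Mapping.keys q"
  let ?mon = "\<lambda>m. \<Prod>i\<in>Poly_Mapping.keys m. x i ^ Poly_Mapping.lookup m i"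
  have superset: "eval r x = (\<Sum>m\<in>?K. Poly_Mapping.lookup r m * ?mon m)"
    if "Poly_Mapping.keys r \<subseteq> ?K" for r
    unfolding eval_def by (rule sum.mono_neutral_left) (auto simp: that in_keys_iff)
  have "eval (p + q) x = (\<Sum>m\<in>?K. Poly_Mapping.lookup (p + q) m * ?mon m)"
    by (rule superset) (use keys_add[of p q] in auto)
  also have "\<dots> = eval p x + eval q x"
    by (simp add: superset lookup_add sum.distrib distrib_right)
  finally show ?thesis .
qed

lemma eval_diff: "eval (p - q) x = eval p x - eval q x"
  using eval_add[of "p - q" q x] by simp

lemma eval_sum: "eval (sum f A) x = (\<Sum>i\<in>A. eval (f i) x)"
  by (induction A rule: infinite_finite_induct) (simp_all add: eval_add eval_def[of 0])

lemma eval_Var: "eval (Var i) x = x i"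
  by (simp add: eval_def Var_def)

lemma eval_Const: "eval (Const c) x = c"
  by (simp add: eval_def Const_def)

lemma TH_nonneg:
  "p \<in> TH n k I \<Longrightarrow> l \<in> polys_deg n 1 \<Longrightarrow> k_sos_mod n k I l \<Longrightarrow> 0 \<le> eval l p"
  unfolding TH_def by blast

section \<open>Idempotents modulo an ideal\<close>

text \<open>g is idempotent modulo I if g^2 = g in the quotient; for I_G these are the
  polynomials taking only the values 0 and 1 on stable sets.\<close>
definition idempotent_mod :: "mpoly set \<Rightarrow> mpoly \<Rightarrow> bool" where
  "idempotent_mod I g \<longleftrightarrow> g * g - g \<in> I"

lemma sos_of_idempotents:
  assumes "h \<in> polys n" "set gs \<subseteq> polys_deg n k"
    and "\<And>g. g \<in> set gs \<Longrightarrow> idempotent_mod (ideal_gen n S) g"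
    and "h - sum_list gs \<in> ideal_gen n S"
  shows "k_sos_mod n k (ideal_gen n S) h"
proof -
  have split: "h - (\<Sum>g\<leftarrow>gs. g * g) = (h - sum_list gs) - (\<Sum>g\<leftarrow>gs. g * g - g)"
    by (simp add: sum_list_subtractf)
  have "(\<Sum>g\<leftarrow>gs. g * g - g) \<in> ideal_gen n S"
    using assms(3) unfolding idempotent_mod_def by (rule ideal_gen_sum_list)
  then have "h - (\<Sum>g\<leftarrow>gs. g * g) \<in> ideal_gen n S"
    unfolding split using assms(4) by (rule ideal_gen_diff[rotated])
  then show ?thesis unfolding k_sos_mod_def using assms(1,2) by blast
qed

lemma idempotent_one_minus: "idempotent_mod I a \<Longrightarrow> idempotent_mod I (1 - a)"
  unfolding idempotent_mod_def by (simp add: algebra_simps)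

lemma idempotent_mult:
  assumes "a \<in> polys n" "b \<in> polys n"
    and "idempotent_mod (ideal_gen n S) a" "idempotent_mod (ideal_gen n S) b"
  shows "idempotent_mod (ideal_gen n S) (a * b)"
proof -
  have "(a * b) * (a * b) - a * b = (b * b) * (a * a - a) + a * (b * b - b)"
    by (simp add: algebra_simps)
  moreover have "(b * b) * (a * a - a) \<in> ideal_gen n S"
    using assms unfolding idempotent_mod_def by (intro ideal_gen_mult polys_mult)
  moreover have "a * (b * b - b) \<in> ideal_gen n S"
    using assms unfolding idempotent_mod_def by (intro ideal_gen_mult)
  ultimately show ?thesis
    unfolding idempotent_mod_def by (simp add: ideal_gen_add)
qed

lemma idempotent_edge:
  assumes "idempotent_mod (ideal_gen n S) a" "idempotent_mod (ideal_gen n S) b"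
    and "a * b \<in> ideal_gen n S"
  shows "idempotent_mod (ideal_gen n S) (1 - a - b)"
proof -
  have expand: "(1 - a - b) * (1 - a - b) - (1 - a - b) = (a * a - a) + (b * b - b) + (a * b + a * b)"
    by (simp add: algebra_simps)
  show ?thesis
    using assms unfolding idempotent_mod_def expand by (intro ideal_gen_add)
qed

section \<open>The odd cycle certificate\<close>

lemma odd_cycle_identity:
  fixes x :: "nat \<Rightarrow> 'a::comm_ring_1"
  shows "(of_nat (k + 1) - (\<Sum>i<2*k+3. x i))
         - ((\<Sum>j<k+1. (1 - x 0) * (1 - x (2*j+1) - x (2*j+2)))
            + (\<Sum>j<k. x 0 * (1 - x (2*j+2) - x (2*j+3))))
         = - (x 0 * x 1) - x 0 * x (2*k+2)"
proof (induction k)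
  case 0
  then show ?case by (simp add: numeral_3_eq_3 algebra_simps)
next
  case (Suc k)
  have split: "(\<Sum>i<2 * Suc k + 3. x i) = (\<Sum>i<2*k+3. x i) + x (2*k+3) + x (2*k+4)"
    by (simp add: numeral_3_eq_3 eval_nat_numeral ac_simps)
  show ?case using Suc by (simp add: split algebra_simps eval_nat_numeral)
qed

lemma odd_cycle_sos:
  fixes x :: "nat \<Rightarrow> mpoly" and k :: nat
  defines "m \<equiv> 2 * k + 3"
  assumes deg: "\<And>i. i < m \<Longrightarrow> x i \<in> polys_deg n 1"
    and idem: "\<And>i. i < m \<Longrightarrow> idempotent_mod (ideal_gen n S) (x i)"
    and edge: "\<And>i. i < m \<Longrightarrow> x i * x ((i + 1) mod m) \<in> ideal_gen n S"
  shows "k_sos_mod n 2 (ideal_gen n S) (of_nat (k + 1) - (\<Sum>i<m. x i))"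
proof -
  define e where "e i = 1 - x i - x (i + 1)" for i
  define A where "A j = (1 - x 0) * e (2*j+1)" for j
  define B where "B j = x 0 * e (2*j+2)" for j
  define gs where "gs = map A [0..<k+1] @ map B [0..<k]"
  have e_deg: "e i \<in> polys_deg n 1" if "i + 1 < m" for i
    unfolding e_def using that deg by (intro polys_deg_diff polys_deg_one) auto
  have e_idem: "idempotent_mod (ideal_gen n S) (e i)" if "i + 1 < m" for i
    unfolding e_def using that idem edge[of i] by (intro idempotent_edge) auto
  have x0: "x 0 \<in> polys_deg n 1" "idempotent_mod (ideal_gen n S) (x 0)"
    using deg idem by (auto simp: m_def)
  have one_minus_x0: "1 - x 0 \<in> polys_deg n 1" "idempotent_mod (ideal_gen n S) (1 - x 0)"
    using x0 by (auto intro: polys_deg_diff polys_deg_one idempotent_one_minus)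
  have square_ok: "g \<in> polys_deg n 2 \<and> idempotent_mod (ideal_gen n S) g"
    if "g = a * e i" "a \<in> polys_deg n 1" "idempotent_mod (ideal_gen n S) a" "i + 1 < m" for g a i
    using that e_deg e_idem polys_deg_mult[of a n 1 "e i" 1]
    by (auto simp: numeral_2_eq_2 intro: idempotent_mult polys_deg_polys)
  have A_ok: "A j \<in> polys_deg n 2 \<and> idempotent_mod (ideal_gen n S) (A j)" if "j < k + 1" for j
    using square_ok[OF A_def one_minus_x0] that by (simp add: m_def)
  have B_ok: "B j \<in> polys_deg n 2 \<and> idempotent_mod (ideal_gen n S) (B j)" if "j < k" for j
    using square_ok[OF B_def x0] that by (simp add: m_def)
  have gs_ok: "g \<in> polys_deg n 2 \<and> idempotent_mod (ideal_gen n S) g" if "g \<in> set gs" for g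
    using that A_ok B_ok unfolding gs_def by (auto simp del: upt_Suc)
  have "of_nat (k + 1) - (\<Sum>i<m. x i) - sum_list gs = - (x 0 * x 1) - x 0 * x (2*k+2)"
    using odd_cycle_identity[of k x]
    by (simp add: gs_def A_def B_def e_def m_def interv_sum_list_conv_sum_set_nat
        atLeast0LessThan add.assoc numeral_3_eq_3 del: upt_Suc)
  moreover have "x 0 * x 1 \<in> ideal_gen n S"
    using edge[of 0] by (simp add: m_def)
  moreover have "x 0 * x (2*k+2) \<in> ideal_gen n S"
  proof -
    have "(2*k+2 + 1) mod m = 0" by (simp add: m_def numeral_3_eq_3)
    then show ?thesis using edge[of "2*k+2"] by (simp add: m_def mult.commute)
  qed
  ultimately have "of_nat (k + 1) - (\<Sum>i<m. x i) - sum_list gs \<in> ideal_gen n S"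
    by (simp add: ideal_gen_diff ideal_gen_uminus)
  moreover have "of_nat (k + 1) - (\<Sum>i<m. x i) \<in> polys n"
    using deg polys_deg_Const[of "real (k + 1)"]
    by (auto intro!: polys_deg_polys[of _ n 1] polys_deg_diff polys_deg_sum
             simp: Const_def of_nat_single)
  ultimately show ?thesis
    using gs_ok by (intro sos_of_idempotents) auto
qed

lemma cycle_vertices:
  assumes "is_graph n E" "is_cycle E cs" "v \<in> set cs"
  shows "v \<in> {1..n}"
proof -
  obtain i where i: "i < length cs" "v = cs ! i"
    using assms(3) by (auto simp: in_set_conv_nth)
  then have "{v, cs ! ((i + 1) mod length cs)} \<in> E"
    using assms(2) unfolding is_cycle_def by blast
  then obtain a b where ab: "{v, cs ! ((i + 1) mod length cs)} = {a, b}" "a \<in> {1..n}" "b \<in> {1..n}"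
    using assms(1) unfolding is_graph_def by blast
  then have "v \<in> {a, b}" by (metis insertI1)
  then show ?thesis using ab(2,3) by blast
qed

lemma odd_cycle_sos_IG:
  assumes "is_graph n E" "is_cycle E cs" "odd (length cs)"
  shows "k_sos_mod n 2 (I_G n E) (Const ((real (length cs) - 1) / 2) - (\<Sum>i\<in>set cs. Var i))"
proof -
  obtain k where k: "length cs = 2 * k + 3"
  proof -
    obtain q where "length cs = 2 * q + 1" using assms(3) by (rule oddE)
    moreover have "length cs \<ge> 3" using assms(2) by (simp add: is_cycle_def)
    ultimately have "length cs = 2 * (q - 1) + 3" by linarith
    then show ?thesis by (rule that)
  qed
  have vertex: "cs ! i \<in> {1..n}" if "i < length cs" for i
    using assms(1,2) that by (intro cycle_vertices) auto
  have "(real (length cs) - 1) / 2 = real (k + 1)"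
    using k by simp
  then have "Const ((real (length cs) - 1) / 2) = of_nat (k + 1)"
    by (metis Const_def comp_apply of_nat_single)
  moreover have "(\<Sum>i\<in>set cs. Var i) = (\<Sum>i<length cs. Var (cs ! i))"
    using assms(2) unfolding is_cycle_def
    by (simp add: sum.distinct_set_conv_list sum_list_sum_nth atLeast0LessThan)
  moreover have "k_sos_mod n 2 (I_G n E) (of_nat (k + 1) - (\<Sum>i<2*k+3. Var (cs ! i)))"
    unfolding I_G_def
  proof (rule odd_cycle_sos)
    fix i assume i: "i < 2 * k + 3"
    show "Var (cs ! i) \<in> polys_deg n 1" using vertex k i by (intro polys_deg_Var) simp
    show "idempotent_mod (ideal_gen n ({Var i * Var i - Var i |i. i \<in> {1..n}}
            \<union> {Var i * Var j |i j. {i, j} \<in> E})) (Var (cs ! i))"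
      unfolding idempotent_mod_def using vertex k i by (intro ideal_gen_in) auto
    show "Var (cs ! i) * Var (cs ! ((i + 1) mod (2 * k + 3))) \<in> ideal_gen n
            ({Var i * Var i - Var i |i. i \<in> {1..n}} \<union> {Var i * Var j |i j. {i, j} \<in> E})"
      using assms(2) k i unfolding is_cycle_def by (intro ideal_gen_in) auto
  qed
  ultimately show ?thesis using k by simp
qed

theorem mainTheorem7:
  fixes n :: nat and E :: "nat set set" and cs :: "nat list"
  assumes "is_graph n E"
    and "is_cycle E cs"
    and "odd (length cs)"
  shows "k_sos_mod n 2 (I_G n E)
           (Const ((real (length cs) - 1) / 2) - (\<Sum>i\<in>set cs. Var i))
         \<and> (\<forall>p \<in> TH n 2 (I_G n E). (\<Sum>i\<in>set cs. p i) \<le> (real (length cs) - 1) / 2)"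
proof
  let ?h = "Const ((real (length cs) - 1) / 2) - (\<Sum>i\<in>set cs. Var i)"
  show sos: "k_sos_mod n 2 (I_G n E) ?h"
    using assms by (rule odd_cycle_sos_IG)
  have affine: "?h \<in> polys_deg n 1"
    using cycle_vertices[OF assms(1,2)]
    by (intro polys_deg_diff polys_deg_Const polys_deg_sum polys_deg_Var)
  show "\<forall>p \<in> TH n 2 (I_G n E). (\<Sum>i\<in>set cs. p i) \<le> (real (length cs) - 1) / 2"
  proof
    fix p assume "p \<in> TH n 2 (I_G n E)"
    then have "0 \<le> eval ?h p" using affine sos by (rule TH_nonneg)
    then show "(\<Sum>i\<in>set cs. p i) \<le> (real (length cs) - 1) / 2"
      by (simp add: eval_diff eval_Const eval_sum eval_Var)
  qed
qed

end
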